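(* Fix $\alpha\in(0,1/2)$ and $q_1,q_3\in(0,1)$. Define $m^*(3/4,3/4)=16\alpha$, $m^*(3/4,1/4)=m^*(1/4,3/4)=\frac{8(1-2\alpha)}{3}$, $m^*(1/4,1/4)=\frac{16\alpha}{9}$, $m^*=\frac{16(4\alpha+3)}{9}$, $\overline{q}^*=\frac{8\alpha+3}{8\alpha+6}$, $$\overline{q}=\frac{1}{m^*}\Big[\big(m^*(\tfrac34,\tfrac34)+m^*(\tfrac34,\tfrac14)\big)q_3+\big(m^*(\tfrac14,\tfrac34)+m^*(\tfrac14,\tfrac14)\big)q_1\Big],$$ and the treatment's steady-state ARQ $$Q=\dfrac{q_3\frac{2(4\alpha+1)}{3(1-q_3)}+q_1\frac{2(3-4\alpha)}{3(1-q_1)}}{\frac{2(4\alpha+1)}{3(1-q_3)}+\frac{2(3-4\alpha)}{3(1-q_1)}}.$$ If $(12\alpha+3)q_3+(3-4\alpha)q_1>8\alpha+3$ and $\frac{4\alpha+1}{1-q_3}+\frac{3-4\alpha}{1-q_1}<\frac{8(4\alpha+3)}{3}$, then $\overline{q}>\overline{q}^*$ but $Q<\overline{q}^*$.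
   Context: Model: user types $(x,e)\in\{1/4,3/4\}^2$ with per-period inflow masses $\alpha$ for $(3/4,3/4)$ and $(1/4,1/4)$ and $1/2-\alpha$ for $(3/4,1/4)$ and $(1/4,3/4)$; an algorithm gives quality $q(x)\in(0,1)$ to segment $x$ and a type-$(x,e)$ user churns each period with probability $(1-q(x))(1-e)$. $m^*(x,e)$ is the status quo ($q^*(x)=x$) steady-state mass, $\overline{q}^*$ the status quo ARQ, $\overline{q}$ the ARQ observed in a one-period experiment of the treatment ($q(1/4)=q_1$, $q(3/4)=q_3$) on the status quo population, and $Q$ the ARQ of the treatment at its own steady state. *)

theory Defs
  imports Complex_Main
begin

definition mstar :: "real \<Rightarrow> real \<Rightarrow> real \<Rightarrow> real" where
  "mstar \<alpha> x e =
     (if x = 3/4 \<and> e = 3/4 then 16 * \<alpha>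
      else if x = 1/4 \<and> e = 1/4 then 16 * \<alpha> / 9
      else 8 * (1 - 2 * \<alpha>) / 3)"

definition mstar_total :: "real \<Rightarrow> real" where
  "mstar_total \<alpha> = 16 * (4 * \<alpha> + 3) / 9"

definition qbar_star :: "real \<Rightarrow> real" where
  "qbar_star \<alpha> = (8 * \<alpha> + 3) / (8 * \<alpha> + 6)"

definition qbar :: "real \<Rightarrow> real \<Rightarrow> real \<Rightarrow> real" where
  "qbar \<alpha> q1 q3 = (1 / mstar_total \<alpha>) *
     ((mstar \<alpha> (3/4) (3/4) + mstar \<alpha> (3/4) (1/4)) * q3
      + (mstar \<alpha> (1/4) (3/4) + mstar \<alpha> (1/4) (1/4)) * q1)"

definition Qss :: "real \<Rightarrow> real \<Rightarrow> real \<Rightarrow> real" where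
  "Qss \<alpha> q1 q3 =
     (q3 * (2 * (4 * \<alpha> + 1) / (3 * (1 - q3))) + q1 * (2 * (3 - 4 * \<alpha>) / (3 * (1 - q1))))
     / (2 * (4 * \<alpha> + 1) / (3 * (1 - q3)) + 2 * (3 - 4 * \<alpha>) / (3 * (1 - q1)))"

end

theory Submission
  imports Defs
begin

text \<open>Both claims reduce to comparisons with the closed form
  \<open>qbar_star \<alpha> = 1 - 3 / (8\<alpha> + 6)\<close>. The one-period ARQ is linear in \<open>q1, q3\<close>, which gives
  the first claim directly. At the treatment's steady state a segment with inflow \<open>c\<close> and
  churn rate \<open>1 - q\<close> has mass \<open>c / (1 - q)\<close>, so its mass-weighted quality is
  \<open>1 - (total inflow) / (total mass)\<close>; hence \<open>Qss = 1 - 4 / S\<close> with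
  \<open>S = (4\<alpha>+1)/(1-q3) + (3-4\<alpha>)/(1-q1)\<close>, and the bound on \<open>S\<close> is exactly \<open>Qss < qbar_star\<close>.\<close>

lemma qbar_star_eq:
  fixes \<alpha> :: real
  assumes "8 * \<alpha> + 6 \<noteq> 0"
  shows "qbar_star \<alpha> = 1 - 3 / (8 * \<alpha> + 6)"
  using assms unfolding qbar_star_def by (simp add: field_simps)

lemma qbar_eq:
  fixes \<alpha> q1 q3 :: real
  assumes "4 * \<alpha> + 3 \<noteq> 0"
  shows "qbar \<alpha> q1 q3 = ((12 * \<alpha> + 3) * q3 + (3 - 4 * \<alpha>) * q1) / (8 * \<alpha> + 6)"
  using assms unfolding qbar_def mstar_def mstar_total_def by (simp add: field_simps)

lemma steady_state_mean_quality:
  fixes q1 q3 c1 c3 :: real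
  defines "S \<equiv> c3 / (1 - q3) + c1 / (1 - q1)"
  assumes "q1 \<noteq> 1" "q3 \<noteq> 1" "S \<noteq> 0"
  shows "(q3 * (c3 / (1 - q3)) + q1 * (c1 / (1 - q1))) / S = 1 - (c3 + c1) / S"
proof -
  have inflow_out: "q * c / (1 - q) = c / (1 - q) - c" if "q \<noteq> 1" for q c :: real
    using that by (simp add: field_simps)
  have "q3 * (c3 / (1 - q3)) + q1 * (c1 / (1 - q1)) = S - (c3 + c1)"
    using assms(2,3) unfolding S_def by (simp add: inflow_out)
  then show ?thesis
    using assms(4) by (simp add: diff_divide_distrib)
qed

lemma Qss_eq:
  fixes \<alpha> q1 q3 :: real
  defines "S \<equiv> (4 * \<alpha> + 1) / (1 - q3) + (3 - 4 * \<alpha>) / (1 - q1)"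
  assumes "q1 \<noteq> 1" "q3 \<noteq> 1" "S \<noteq> 0"
  shows "Qss \<alpha> q1 q3 = 1 - 4 / S"
proof -
  let ?c3 = "2 * (4 * \<alpha> + 1) / 3" and ?c1 = "2 * (3 - 4 * \<alpha>) / 3"
  have weights: "2 * (4 * \<alpha> + 1) / (3 * (1 - q3)) = ?c3 / (1 - q3)"
    "2 * (3 - 4 * \<alpha>) / (3 * (1 - q1)) = ?c1 / (1 - q1)"
    by simp_all
  have total: "?c3 / (1 - q3) + ?c1 / (1 - q1) = 2 / 3 * S"
    unfolding S_def by (simp add: add_divide_distrib mult.commute)
  have "Qss \<alpha> q1 q3 = 1 - (?c3 + ?c1) / (2 / 3 * S)"
    unfolding Qss_def weights
    using steady_state_mean_quality[of q1 q3 ?c3 ?c1] assms(2-4) unfolding total by simp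
  also have "\<dots> = 1 - 4 / S"
    by (simp add: field_simps)
  finally show ?thesis .
qed

theorem lemma2:
  fixes \<alpha> q1 q3 :: real
  assumes "0 < \<alpha>" "\<alpha> < 1/2"
    and "0 < q1" "q1 < 1" "0 < q3" "q3 < 1"
    and "(12 * \<alpha> + 3) * q3 + (3 - 4 * \<alpha>) * q1 > 8 * \<alpha> + 3"
    and "(4 * \<alpha> + 1) / (1 - q3) + (3 - 4 * \<alpha>) / (1 - q1) < 8 * (4 * \<alpha> + 3) / 3"
  shows "qbar \<alpha> q1 q3 > qbar_star \<alpha> \<and> Qss \<alpha> q1 q3 < qbar_star \<alpha>"
proof
  show "qbar \<alpha> q1 q3 > qbar_star \<alpha>"
    using assms(1,7) qbar_eq[of \<alpha> q1 q3] unfolding qbar_star_def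
    by (simp add: divide_strict_right_mono)
  define S where "S = (4 * \<alpha> + 1) / (1 - q3) + (3 - 4 * \<alpha>) / (1 - q1)"
  have "S > 0"
    unfolding S_def using assms(1-6) by (intro add_pos_pos divide_pos_pos) simp_all
  have "3 / (8 * \<alpha> + 6) < 4 / S"
    using \<open>S > 0\<close> assms(1,8) unfolding S_def[symmetric] by (simp add: field_simps)
  then show "Qss \<alpha> q1 q3 < qbar_star \<alpha>"
    using \<open>S > 0\<close> assms(1,4,6) Qss_eq[of q1 q3 \<alpha>] qbar_star_eq[of \<alpha>]
    unfolding S_def[symmetric] by simp
qed

end
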